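(* Let $(\mathcal{H},L)$ have the uniform convergence property with respect to $\mathcal{D}$, with uniform convergence function $f$, let $\varepsilon>0$, $\alpha>0$, and assume $\Pr[\widehat{\Theta}_S^\varepsilon\neq\varnothing]>0$. (i) If the risk minimizer $\theta_0\in\arg\min_\Theta R$ exists, then $(\mathcal{H},L)$ is valid at level $\alpha$ and tolerance $\varepsilon$ whenever $m\ge f(\varepsilon/2,\alpha)$. (ii) If the risk minimizer does not exist, then $(\mathcal{H},L)$ is valid at level $\alpha$ and tolerance $\varepsilon$ whenever $m\ge\inf_{0<\delta<\varepsilon}f((\varepsilon-\delta)/2,\alpha)$.
   Context: Setting: data are i.i.d. from a distribution $\mathcal{D}$ on $\mathcal{X}\times\mathcal{Y}$; $\mathcal{H}=\{x\mapsto h(x;\theta)\mid\theta\in\Theta\}$ with $\Theta$ a topological space, $L:\mathcal{Y}\times\mathcal{Y}\to\mathbb{R}$ a loss; risk $R(\theta)=\mathbb{E}_{\mathcal{D}}[L(h(X;\theta),Y)]$ (finite), empirical risk $\widehat{R}_S(\theta)=\frac1m\sum_{i=1}^mL(h(X_i;\theta),Y_i)$ for $S\sim\mathcal{D}^m$. All events are assumed measurable. Uniform convergence property: there is $w:\mathbb{R}^+\times\mathbb{R}^+\to\mathbb{R}$ (a "witness") such that for all $\varepsilon,\alpha>0$ and integers $m\ge w(\varepsilon,\alpha)$, $\Pr_{S\sim\mathcal{D}^m}[\sup_{\theta}|R(\theta)-\widehat{R}_S(\theta)|\le\varepsilon]\ge1-\alpha$; the uniform convergence function is $f(\varepsilon,\alpha)=\inf_{w}\lceil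 w(\varepsilon,\alpha)\rceil$ over all witnesses $w$. $\widehat{\Theta}_S^\varepsilon=\{\theta\mid\widehat{R}_S(\theta)\le\inf_\vartheta\widehat{R}_S(\vartheta)+\varepsilon\}$, $\Theta_0^\delta=\{\theta\mid R(\theta)\le\inf_\vartheta R(\vartheta)+\delta\}$. The $\varepsilon$-plausibility of a Borel set $A\subseteq\Theta$ is $\mathrm{pl}_\varepsilon(A)=\Pr_{S\sim\mathcal{D}^m}[\widehat{\Theta}_S^\varepsilon\cap A\ne\varnothing\mid\widehat{\Theta}_S^\varepsilon\ne\varnothing]$. Validity: at a fixed sample size $m$, $(\mathcal{H},L)$ is valid at level $\alpha$ and tolerance $\varepsilon$ if for every Borel set $A\subseteq\Theta$ for which there exists $\delta\ge0$ with $\Theta_0^\delta\subseteq A$ and $\Theta_0^\delta\neq\varnothing$, one has $\mathrm{pl}_\varepsilon(A)\ge1-\alpha$. *)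

theory Defs
  imports "HOL-Probability.Probability"
begin

text \<open>Data points are pairs z = (x,y) distributed according to D.
  The hypothesis is h x \<theta> (= h(x;\<theta>)), the loss is L (prediction) y.\<close>

definition risk :: "('x \<times> 'y) measure \<Rightarrow> ('y \<Rightarrow> 'y \<Rightarrow> real) \<Rightarrow> ('x \<Rightarrow> 'p \<Rightarrow> 'y) \<Rightarrow> 'p \<Rightarrow> real" where
  "risk D L h \<theta> = (\<integral>z. L (h (fst z) \<theta>) (snd z) \<partial>D)"

definition emp_risk :: "('y \<Rightarrow> 'y \<Rightarrow> real) \<Rightarrow> ('x \<Rightarrow> 'p \<Rightarrow> 'y) \<Rightarrow> nat \<Rightarrow> (nat \<Rightarrow> 'x \<times> 'y) \<Rightarrow> 'p \<Rightarrow> real" where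
  "emp_risk L h m S \<theta> = (\<Sum>i<m. L (h (fst (S i)) \<theta>) (snd (S i))) / real m"

definition sample_measure :: "('x \<times> 'y) measure \<Rightarrow> nat \<Rightarrow> (nat \<Rightarrow> 'x \<times> 'y) measure" where
  "sample_measure D m = PiM {..<m} (\<lambda>_. D)"

definition uc_event :: "('x \<times> 'y) measure \<Rightarrow> ('y \<Rightarrow> 'y \<Rightarrow> real) \<Rightarrow> ('x \<Rightarrow> 'p \<Rightarrow> 'y) \<Rightarrow> nat \<Rightarrow> real \<Rightarrow> (nat \<Rightarrow> 'x \<times> 'y) set" where
  "uc_event D L h m \<epsilon> = {S \<in> space (sample_measure D m).
      (SUP \<theta>. ereal \<bar>risk D L h \<theta> - emp_risk L h m S \<theta>\<bar>) \<le> ereal \<epsilon>}"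

definition uc_witness :: "('x \<times> 'y) measure \<Rightarrow> ('y \<Rightarrow> 'y \<Rightarrow> real) \<Rightarrow> ('x \<Rightarrow> 'p \<Rightarrow> 'y) \<Rightarrow> (real \<Rightarrow> real \<Rightarrow> real) \<Rightarrow> bool" where
  "uc_witness D L h w \<longleftrightarrow>
     (\<forall>\<epsilon>>0. \<forall>\<alpha>>0. \<forall>m::nat. 0 < m \<and> w \<epsilon> \<alpha> \<le> real m \<longrightarrow>
        1 - \<alpha> \<le> measure (sample_measure D m) (uc_event D L h m \<epsilon>))"

definition has_uc_property :: "('x \<times> 'y) measure \<Rightarrow> ('y \<Rightarrow> 'y \<Rightarrow> real) \<Rightarrow> ('x \<Rightarrow> 'p \<Rightarrow> 'y) \<Rightarrow> bool" where
  "has_uc_property D L h \<longleftrightarrow> (\<exists>w. uc_witness D L h w)"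

text \<open>Uniform convergence function f(\<epsilon>,\<alpha>) = inf over witnesses of ceil(w(\<epsilon>,\<alpha>)),
  taken in the extended reals (so that an unbounded-below infimum is -\<infinity>).\<close>
definition uc_function :: "('x \<times> 'y) measure \<Rightarrow> ('y \<Rightarrow> 'y \<Rightarrow> real) \<Rightarrow> ('x \<Rightarrow> 'p \<Rightarrow> 'y) \<Rightarrow> real \<Rightarrow> real \<Rightarrow> ereal" where
  "uc_function D L h \<epsilon> \<alpha> = (INF w \<in> {w. uc_witness D L h w}. ereal (real_of_int \<lceil>w \<epsilon> \<alpha>\<rceil>))"

text \<open>\<Theta>_S^\<epsilon> (infimum in the extended reals; empty if the empirical risk is unbounded below).\<close>
definition emp_eps_set :: "('y \<Rightarrow> 'y \<Rightarrow> real) \<Rightarrow> ('x \<Rightarrow> 'p \<Rightarrow> 'y) \<Rightarrow> nat \<Rightarrow> (nat \<Rightarrow> 'x \<times> 'y) \<Rightarrow> real \<Rightarrow> 'p set" where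
  "emp_eps_set L h m S \<epsilon> =
     {\<theta>. ereal (emp_risk L h m S \<theta>) \<le> (INF t. ereal (emp_risk L h m S t)) + ereal \<epsilon>}"

definition risk_delta_set :: "('x \<times> 'y) measure \<Rightarrow> ('y \<Rightarrow> 'y \<Rightarrow> real) \<Rightarrow> ('x \<Rightarrow> 'p \<Rightarrow> 'y) \<Rightarrow> real \<Rightarrow> 'p set" where
  "risk_delta_set D L h \<delta> =
     {\<theta>. ereal (risk D L h \<theta>) \<le> (INF t. ereal (risk D L h t)) + ereal \<delta>}"

definition plausibility :: "('x \<times> 'y) measure \<Rightarrow> ('y \<Rightarrow> 'y \<Rightarrow> real) \<Rightarrow> ('x \<Rightarrow> 'p \<Rightarrow> 'y) \<Rightarrow> nat \<Rightarrow> real \<Rightarrow> 'p set \<Rightarrow> real" where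
  "plausibility D L h m \<epsilon> A =
     measure (sample_measure D m)
        {S \<in> space (sample_measure D m). emp_eps_set L h m S \<epsilon> \<inter> A \<noteq> {} \<and> emp_eps_set L h m S \<epsilon> \<noteq> {}}
     / measure (sample_measure D m) {S \<in> space (sample_measure D m). emp_eps_set L h m S \<epsilon> \<noteq> {}}"

definition valid :: "('x \<times> 'y) measure \<Rightarrow> ('y \<Rightarrow> 'y \<Rightarrow> real) \<Rightarrow> ('x \<Rightarrow> 'p::topological_space \<Rightarrow> 'y) \<Rightarrow> nat \<Rightarrow> real \<Rightarrow> real \<Rightarrow> bool" where
  "valid D L h m \<alpha> \<epsilon> \<longleftrightarrow>
     (\<forall>A \<in> sets borel. (\<exists>\<delta>\<ge>0. risk_delta_set D L h \<delta> \<subseteq> A \<and> risk_delta_set D L h \<delta> \<noteq> {})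
        \<longrightarrow> 1 - \<alpha> \<le> plausibility D L h m \<epsilon> A)"

definition events_measurable :: "('x \<times> 'y) measure \<Rightarrow> ('y \<Rightarrow> 'y \<Rightarrow> real) \<Rightarrow> ('x \<Rightarrow> 'p::topological_space \<Rightarrow> 'y) \<Rightarrow> bool" where
  "events_measurable D L h \<longleftrightarrow>
     (\<forall>m>0. \<forall>\<epsilon>>0.
        uc_event D L h m \<epsilon> \<in> sets (sample_measure D m) \<and>
        {S \<in> space (sample_measure D m). emp_eps_set L h m S \<epsilon> \<noteq> {}} \<in> sets (sample_measure D m) \<and>
        (\<forall>A \<in> sets borel. {S \<in> space (sample_measure D m). emp_eps_set L h m S \<epsilon> \<inter> A \<noteq> {}}
             \<in> sets (sample_measure D m)))"

end

theory Submission
  imports Defs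
begin

text \<open>On the uniform convergence event at accuracy \<eta>, every parameter whose risk is within d of
  the infimum has empirical risk within d + 2\<eta> of the empirical infimum. Hence, if every
  admissible set A contains such a near-minimizer and d + 2\<eta> \<le> \<epsilon>, the event
  \<open>\<Theta>_S^\<epsilon> \<inter> A \<noteq> {}\<close> has probability at least that of uniform convergence, which is at least
  1 - \<alpha> once m is at least the uniform convergence function. With a risk minimizer one takes
  d = 0 and \<eta> = \<epsilon>/2; without one, every nonempty \<Theta>_0^\<delta> has \<delta> > 0 and so contains
  parameters with risk arbitrarily close to the infimum, which allows any d = \<delta>' in (0, \<epsilon>)
  and \<eta> = (\<epsilon> - \<delta>')/2.\<close>

lemma abs_risk_emp_risk_le_if_uc_event:
  assumes "S \<in> uc_event D L h m \<eta>"
  shows "\<bar>risk D L h t - emp_risk L h m S t\<bar> \<le> \<eta>"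
proof -
  have "ereal \<bar>risk D L h t - emp_risk L h m S t\<bar>
      \<le> (SUP \<theta>. ereal \<bar>risk D L h \<theta> - emp_risk L h m S \<theta>\<bar>)"
    by (rule SUP_upper) simp
  also have "\<dots> \<le> ereal \<eta>" using assms unfolding uc_event_def by simp
  finally show ?thesis by simp
qed

lemma near_minimizer_in_emp_eps_set:
  assumes close: "\<And>t. \<bar>risk D L h t - emp_risk L h m S t\<bar> \<le> \<eta>"
    and near: "\<And>t. risk D L h \<theta> \<le> risk D L h t + d"
    and "d + 2 * \<eta> \<le> \<epsilon>"
  shows "\<theta> \<in> emp_eps_set L h m S \<epsilon>"
proof -
  have "ereal (emp_risk L h m S \<theta> - \<epsilon>) \<le> ereal (emp_risk L h m S t)" for t
    using close[of t] close[of \<theta>] near[of t] assms(3) by (simp add: abs_le_iff)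
  hence "ereal (emp_risk L h m S \<theta> - \<epsilon>) \<le> (INF t. ereal (emp_risk L h m S t))"
    by (rule INF_greatest)
  hence "ereal (emp_risk L h m S \<theta> - \<epsilon>) + ereal \<epsilon> \<le> (INF t. ereal (emp_risk L h m S t)) + ereal \<epsilon>"
    by (rule add_right_mono)
  thus ?thesis unfolding emp_eps_set_def by simp
qed

text \<open>The witnesses take integer values after rounding up, so their infimum lies below m + 1
  only if some witness is at most m.\<close>

lemma uc_event_prob_ge:
  assumes "uc_function D L h \<eta> \<alpha> < ereal (real m + 1)" "0 < \<eta>" "0 < \<alpha>" "0 < m"
  shows "1 - \<alpha> \<le> measure (sample_measure D m) (uc_event D L h m \<eta>)"
proof -
  obtain w where w: "uc_witness D L h w" "real_of_int \<lceil>w \<eta> \<alpha>\<rceil> < real m + 1"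
    using assms(1) unfolding uc_function_def by (auto simp: INF_less_iff)
  hence "\<lceil>w \<eta> \<alpha>\<rceil> \<le> int m" by linarith
  hence "w \<eta> \<alpha> \<le> real m" by linarith
  thus ?thesis using w(1) assms(2-4) unfolding uc_witness_def by blast
qed

lemma prob_space_sample_measure:
  assumes "prob_space D"
  shows "prob_space (sample_measure D m)"
  unfolding sample_measure_def by (rule prob_space_PiM) (use assms in auto)

lemma plausibility_ge_measure:
  assumes "prob_space D"
    and pos: "0 < measure (sample_measure D m)
              {S \<in> space (sample_measure D m). emp_eps_set L h m S \<epsilon> \<noteq> {}}"
  shows "measure (sample_measure D m)
           {S \<in> space (sample_measure D m). emp_eps_set L h m S \<epsilon> \<inter> A \<noteq> {}}
         \<le> plausibility D L h m \<epsilon> A"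
proof -
  let ?M = "sample_measure D m"
  let ?EA = "{S \<in> space ?M. emp_eps_set L h m S \<epsilon> \<inter> A \<noteq> {}}"
  let ?E = "{S \<in> space ?M. emp_eps_set L h m S \<epsilon> \<noteq> {}}"
  have "measure ?M ?E \<le> 1"
    using prob_space_sample_measure[OF assms(1)] by (simp add: prob_space.prob_le_1)
  hence "measure ?M ?EA \<le> measure ?M ?EA / measure ?M ?E"
    using pos by (simp add: le_divide_eq mult_left_le)
  moreover have "{S \<in> space ?M. emp_eps_set L h m S \<epsilon> \<inter> A \<noteq> {} \<and> emp_eps_set L h m S \<epsilon> \<noteq> {}} = ?EA"
    by auto
  ultimately show ?thesis unfolding plausibility_def by simp
qed

lemma valid_if_near_minimizers:
  fixes h :: "'x \<Rightarrow> 'p::topological_space \<Rightarrow> 'y"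
  assumes "prob_space D" and meas: "events_measurable D L h"
    and "0 < \<epsilon>" and "0 < m"
    and pos: "0 < measure (sample_measure D m)
              {S \<in> space (sample_measure D m). emp_eps_set L h m S \<epsilon> \<noteq> {}}"
    and uc: "1 - \<alpha> \<le> measure (sample_measure D m) (uc_event D L h m \<eta>)"
    and "d + 2 * \<eta> \<le> \<epsilon>"
    and near: "\<And>\<delta>. 0 \<le> \<delta> \<Longrightarrow> risk_delta_set D L h \<delta> \<noteq> {} \<Longrightarrow>
                 \<exists>\<theta>\<in>risk_delta_set D L h \<delta>. \<forall>t. risk D L h \<theta> \<le> risk D L h t + d"
  shows "valid D L h m \<alpha> \<epsilon>"
  unfolding valid_def
proof (intro ballI impI)
  fix A :: "'p set"
  assume A: "A \<in> sets borel"
    and "\<exists>\<delta>\<ge>0. risk_delta_set D L h \<delta> \<subseteq> A \<and> risk_delta_set D L h \<delta> \<noteq> {}"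
  then obtain \<theta> where "\<theta> \<in> A" and \<theta>: "\<And>t. risk D L h \<theta> \<le> risk D L h t + d"
    using near by blast
  let ?M = "sample_measure D m"
  let ?EA = "{S \<in> space ?M. emp_eps_set L h m S \<epsilon> \<inter> A \<noteq> {}}"
  have "uc_event D L h m \<eta> \<subseteq> ?EA"
  proof
    fix S assume S: "S \<in> uc_event D L h m \<eta>"
    have "\<theta> \<in> emp_eps_set L h m S \<epsilon>"
      using abs_risk_emp_risk_le_if_uc_event[OF S] \<theta> assms(7)
      by (rule near_minimizer_in_emp_eps_set)
    with \<open>\<theta> \<in> A\<close> S show "S \<in> ?EA" unfolding uc_event_def by auto
  qed
  moreover have "?EA \<in> sets ?M"
    using meas assms(3,4) A unfolding events_measurable_def by blast
  ultimately have "measure ?M (uc_event D L h m \<eta>) \<le> measure ?M ?EA"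
    using prob_space_sample_measure[OF assms(1)]
    by (meson prob_space.axioms(1) finite_measure.finite_measure_mono)
  with uc plausibility_ge_measure[OF assms(1) pos, of A] show "1 - \<alpha> \<le> plausibility D L h m \<epsilon> A"
    by linarith
qed

lemma risk_minimizer_in_risk_delta_set:
  assumes "\<And>\<theta>. risk D L h \<theta>\<^sub>0 \<le> risk D L h \<theta>" and "0 \<le> \<delta>"
  shows "\<theta>\<^sub>0 \<in> risk_delta_set D L h \<delta>"
proof -
  have "(INF t. ereal (risk D L h t)) = ereal (risk D L h \<theta>\<^sub>0)"
    by (rule antisym) (auto intro: INF_lower INF_greatest simp: assms(1))
  thus ?thesis unfolding risk_delta_set_def using assms(2) by simp
qed

lemma risk_minimizer_if_in_risk_delta_set_zero:
  assumes "\<theta> \<in> risk_delta_set D L h 0"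
  shows "risk D L h \<theta> \<le> risk D L h t"
proof -
  have "ereal (risk D L h \<theta>) \<le> (INF t. ereal (risk D L h t))"
    using assms unfolding risk_delta_set_def by simp
  also have "\<dots> \<le> ereal (risk D L h t)" by (rule INF_lower) simp
  finally show ?thesis by simp
qed

lemma risk_delta_set_near_minimizer:
  assumes "\<theta>\<^sub>1 \<in> risk_delta_set D L h \<delta>" and "0 < \<delta>" and "0 < e"
  shows "\<exists>\<theta>\<in>risk_delta_set D L h \<delta>. \<forall>t. risk D L h \<theta> \<le> risk D L h t + e"
proof -
  let ?I = "INF t. ereal (risk D L h t)"
  have "ereal (risk D L h \<theta>\<^sub>1) \<le> ?I + ereal \<delta>"
    using assms(1) unfolding risk_delta_set_def by simp
  moreover have "?I \<le> ereal (risk D L h \<theta>\<^sub>1)" by (rule INF_lower) simp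
  ultimately obtain r where r: "?I = ereal r" by (cases ?I) auto
  have r_le: "r \<le> risk D L h t" for t
  proof -
    have "?I \<le> ereal (risk D L h t)" by (rule INF_lower) simp
    thus ?thesis using r by simp
  qed
  have "?I < ereal (r + min e \<delta>)" using r assms(2,3) by simp
  then obtain \<theta> where \<theta>: "risk D L h \<theta> < r + min e \<delta>" by (auto simp: INF_less_iff)
  hence "\<theta> \<in> risk_delta_set D L h \<delta>" unfolding risk_delta_set_def using r by simp
  moreover have "\<forall>t. risk D L h \<theta> \<le> risk D L h t + e" using \<theta> r_le by (smt (verit))
  ultimately show ?thesis by blast
qed

theorem mainTheorem4:
  fixes D :: "('x \<times> 'y) measure" and L :: "'y \<Rightarrow> 'y \<Rightarrow> real"
    and h :: "'x \<Rightarrow> 'p::topological_space \<Rightarrow> 'y"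
    and m :: nat and \<epsilon> \<alpha> :: real
  assumes "prob_space D"
    and "\<And>\<theta>. integrable D (\<lambda>z. L (h (fst z) \<theta>) (snd z))"
    and "events_measurable D L h"
    and "has_uc_property D L h"
    and "0 < \<epsilon>" and "0 < \<alpha>" and "0 < m"
    and "0 < measure (sample_measure D m)
              {S \<in> space (sample_measure D m). emp_eps_set L h m S \<epsilon> \<noteq> {}}"
  shows "((\<exists>\<theta>\<^sub>0. \<forall>\<theta>. risk D L h \<theta>\<^sub>0 \<le> risk D L h \<theta>) \<longrightarrow>
            uc_function D L h (\<epsilon> / 2) \<alpha> \<le> ereal (real m) \<longrightarrow> valid D L h m \<alpha> \<epsilon>)
       \<and> ((\<not> (\<exists>\<theta>\<^sub>0. \<forall>\<theta>. risk D L h \<theta>\<^sub>0 \<le> risk D L h \<theta>)) \<longrightarrow>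
            (INF \<delta> \<in> {0<..<\<epsilon>}. uc_function D L h ((\<epsilon> - \<delta>) / 2) \<alpha>) \<le> ereal (real m) \<longrightarrow>
            valid D L h m \<alpha> \<epsilon>)"
proof (intro conjI impI)
  assume "\<exists>\<theta>\<^sub>0. \<forall>\<theta>. risk D L h \<theta>\<^sub>0 \<le> risk D L h \<theta>"
    and f: "uc_function D L h (\<epsilon> / 2) \<alpha> \<le> ereal (real m)"
  then obtain \<theta>\<^sub>0 where "\<And>\<theta>. risk D L h \<theta>\<^sub>0 \<le> risk D L h \<theta>" by blast
  moreover have "uc_function D L h (\<epsilon> / 2) \<alpha> < ereal (real m + 1)"
    using f by (rule le_less_trans) simp
  ultimately show "valid D L h m \<alpha> \<epsilon>"
    using assms(5-7)
    by (intro valid_if_near_minimizers[OF assms(1,3,5,7,8), where d = 0 and \<eta> = "\<epsilon> / 2"]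
          uc_event_prob_ge)
       (auto intro: risk_minimizer_in_risk_delta_set)
next
  assume no_min: "\<not> (\<exists>\<theta>\<^sub>0. \<forall>\<theta>. risk D L h \<theta>\<^sub>0 \<le> risk D L h \<theta>)"
    and f: "(INF \<delta> \<in> {0<..<\<epsilon>}. uc_function D L h ((\<epsilon> - \<delta>) / 2) \<alpha>) \<le> ereal (real m)"
  have "(INF \<delta> \<in> {0<..<\<epsilon>}. uc_function D L h ((\<epsilon> - \<delta>) / 2) \<alpha>) < ereal (real m + 1)"
    using f by (rule le_less_trans) simp
  then obtain \<delta>' where \<delta>': "0 < \<delta>'" "\<delta>' < \<epsilon>"
    and "uc_function D L h ((\<epsilon> - \<delta>') / 2) \<alpha> < ereal (real m + 1)"
    by (auto simp: INF_less_iff)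
  moreover have "\<exists>\<theta>\<in>risk_delta_set D L h \<delta>. \<forall>t. risk D L h \<theta> \<le> risk D L h t + \<delta>'"
    if "0 \<le> \<delta>" and \<theta>\<^sub>1: "\<theta>\<^sub>1 \<in> risk_delta_set D L h \<delta>" for \<delta> \<theta>\<^sub>1
  proof -
    have "\<delta> \<noteq> 0"
      using no_min risk_minimizer_if_in_risk_delta_set_zero[of \<theta>\<^sub>1] \<theta>\<^sub>1 by blast
    with that \<delta>'(1) show ?thesis by (intro risk_delta_set_near_minimizer) auto
  qed
  ultimately show "valid D L h m \<alpha> \<epsilon>"
    using assms(6,7)
    by (intro valid_if_near_minimizers[OF assms(1,3,5,7,8), where d = \<delta>' and \<eta> = "(\<epsilon> - \<delta>') / 2"]
          uc_event_prob_ge)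
       (auto simp: field_simps)
qed

end
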